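(* Let $K:[0,1]^2\to\mathbb R$ be nonnegative, measurable, symmetric ($K(x,y)=K(y,x)$) with $\sup_{x\in[0,1]}\int_0^1K(x,y)\,dy<+\infty$. Take the weight matrix $\mathbf K=P_nK$. Assume that $\rho_n\to0$ and $n\rho_n=\omega((\log n)^\gamma)$ for some $\gamma>1$. Let $w_{ij}=\min(\mathbf K_{ij},\rho_n^{-1})$ and let $\mathbf\Lambda$ be a random $n\times n$ matrix whose entries $\mathbf\Lambda_{ij}$ ($i\neq j$) are such that $\rho_n\mathbf\Lambda_{ij}$ is Bernoulli with parameter $\rho_n w_{ij}$, and for each row $i$ the variables $(\mathbf\Lambda_{ij})_{j\in[n]}$ are independent. Then with probability $1$, \[\|I_n\mathbf\Lambda\|_{L^{\infty,1}([0,1]^2)}-\|I_nw\|_{L^{\infty,1}([0,1]^2)}\to0 .\] If moreover $\|I_n\mathbf K(x,\cdot)-K(x,\cdot)\|_{L^1([0,1])}\to0$ uniformly in $x\in[0,1]$, then with probability $1$, $\|I_n\mathbf\Lambda\|_{L^{\infty,1}([0,1]^2)}\to\|K\|_{L^{\infty,1}([0,1]^2)}$.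
   Context: For $n\in\mathbb N^*$, use the equispaced partition of $[0,1]$ into intervals $]x_{i-1},x_i]$, $x_i=i/n$. $(P_nK)_{ij}=n^2\int_{]x_{i-1},x_i]\times]x_{j-1},x_j]}K$, and for a matrix $\mathbf M$, $I_n\mathbf M(x,y)=\sum_{i,j}\mathbf M_{ij}\chi_{]x_{i-1},x_i]}(x)\chi_{]x_{j-1},x_j]}(y)$. For $F$ on $[0,1]^2$, $\|F\|_{L^{\infty,1}([0,1]^2)}=\sup_x\int_0^1|F(x,y)|dy$. *)

theory Defs
  imports "HOL-Probability.Probability" "HOL-Library.Landau_Symbols"
begin

definition cell :: "nat \<Rightarrow> nat \<Rightarrow> real set" where
  "cell n i = {real i / real n <.. real (Suc i) / real n}"

definition Pn :: "nat \<Rightarrow> (real \<Rightarrow> real \<Rightarrow> real) \<Rightarrow> nat \<Rightarrow> nat \<Rightarrow> real" where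
  "Pn n K i j = (real n)\<^sup>2 *
     (LINT z : cell n i \<times> cell n j | (lborel :: (real \<times> real) measure). K (fst z) (snd z))"

definition In :: "nat \<Rightarrow> (nat \<Rightarrow> nat \<Rightarrow> real) \<Rightarrow> real \<Rightarrow> real \<Rightarrow> real" where
  "In n M x y = (\<Sum>i<n. \<Sum>j<n. M i j * indicator (cell n i) x * indicator (cell n j) y)"

definition Linf1 :: "(real \<Rightarrow> real \<Rightarrow> real) \<Rightarrow> real" where
  "Linf1 F = enn2real (SUP x\<in>{0..1}. \<integral>\<^sup>+ y\<in>{0..1}. ennreal \<bar>F x y\<bar> \<partial>lborel)"

end

theory Submission
  imports Defs
begin

text \<open>
  For a step kernel the \<open>L\<^sup>\<infinity>\<^sup>,\<^sup>1\<close> norm is the largest normalised absolute row sum of the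
  matrix. Off the diagonal, the row sums of \<open>\<rho>\<^sub>n \<Lambda>\<close> are sums of independent Bernoulli variables
  with mean at most \<open>C n \<rho>\<^sub>n\<close>, so by the multiplicative Chernoff bound a deviation of
  \<open>\<epsilon> n \<rho>\<^sub>n / 2\<close> has probability \<open>exp (- c \<epsilon>\<^sup>2 n \<rho>\<^sub>n) = o(n\<^sup>-\<^sup>3)\<close>, because \<open>log n = o(n \<rho>\<^sub>n)\<close>.
  A union bound over the \<open>n\<close> rows and Borel-Cantelli give almost surely uniform convergence of
  the row averages of \<open>\<Lambda>\<close> to those of \<open>w\<close>; the diagonal entry only contributes \<open>1 / (n \<rho>\<^sub>n)\<close>.
  For the second claim, truncation at the level \<open>1 / \<rho>\<^sub>n \<rightarrow> \<infinity>\<close> eventually does not affect a fixed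
  bounded approximant \<open>I\<^sub>N P\<^sub>N K\<close> of \<open>K\<close>.
\<close>

section \<open>Chernoff bounds for sums of independent Bernoulli variables\<close>

lemma exp_le_1_plus_self_plus_sq:
  fixes l :: real
  assumes "\<bar>l\<bar> \<le> 1"
  shows "exp l \<le> 1 + l + l\<^sup>2"
proof (cases "0 \<le> l")
  case True
  then show ?thesis using exp_bound[of l] assms by auto
next
  case False
  define y where "y = - l"
  have y: "0 < y" "y \<le> 1" using False assms by (auto simp: y_def)
  have "exp l = 1 / exp y" by (simp add: y_def exp_minus field_simps)
  also have "\<dots> \<le> 1 / (1 + y)" using y by (intro divide_left_mono) auto
  also have "\<dots> \<le> 1 - y + y\<^sup>2"
    using y by (simp add: field_simps power2_eq_square)
  finally show ?thesis by (simp add: y_def)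
qed

context prob_space
begin

lemma
  fixes X :: "'a \<Rightarrow> real"
  assumes [measurable]: "X \<in> borel_measurable M"
    and vals: "AE \<omega> in M. X \<omega> \<in> {0, 1}" and prob_one: "prob {\<omega> \<in> space M. X \<omega> = 1} = p"
  shows integrable_exp_bernoulli: "integrable M (\<lambda>\<omega>. exp (l * X \<omega>))"
    and expectation_exp_bernoulli: "expectation (\<lambda>\<omega>. exp (l * X \<omega>)) = 1 + (exp l - 1) * p"
proof -
  show "integrable M (\<lambda>\<omega>. exp (l * X \<omega>))"
    using vals by (intro integrable_const_bound[where B="exp \<bar>l\<bar>"]) (auto elim!: eventually_mono)
  have "AE \<omega> in M. exp (l * X \<omega>) = 1 + (exp l - 1) * indicator {\<omega> \<in> space M. X \<omega> = 1} \<omega>"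
    using vals AE_space by eventually_elim auto
  then have "expectation (\<lambda>\<omega>. exp (l * X \<omega>))
             = expectation (\<lambda>\<omega>. 1 + (exp l - 1) * indicator {\<omega> \<in> space M. X \<omega> = 1} \<omega>)"
    by (intro integral_cong_AE) auto
  also have "\<dots> = 1 + (exp l - 1) * p"
    using prob_one by (subst Bochner_Integration.integral_add)
      (auto simp: prob_space intro!: emeasure_finite[THEN less_top[THEN iffD1]])
  finally show "expectation (\<lambda>\<omega>. exp (l * X \<omega>)) = 1 + (exp l - 1) * p" .
qed

lemma
  fixes X :: "'i \<Rightarrow> 'a \<Rightarrow> real" and p :: "'i \<Rightarrow> real"
  assumes J: "finite J" and indep: "indep_vars (\<lambda>_. borel) X J"
    and vals: "\<And>j. j \<in> J \<Longrightarrow> AE \<omega> in M. X j \<omega> \<in> {0, 1}"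
    and prob_one: "\<And>j. j \<in> J \<Longrightarrow> prob {\<omega> \<in> space M. X j \<omega> = 1} = p j"
  shows integrable_exp_sum_bernoulli: "integrable M (\<lambda>\<omega>. exp (l * (\<Sum>j\<in>J. X j \<omega>)))"
    and expectation_exp_sum_bernoulli_le:
      "expectation (\<lambda>\<omega>. exp (l * (\<Sum>j\<in>J. X j \<omega>))) \<le> exp ((\<Sum>j\<in>J. p j) * (exp l - 1))"
proof -
  have X_meas: "X j \<in> borel_measurable M" if "j \<in> J" for j
    using indep that by (auto simp: indep_vars_def)
  have prod_exp: "exp (l * (\<Sum>j\<in>J. X j \<omega>)) = (\<Prod>j\<in>J. exp (l * X j \<omega>))" for \<omega>
    by (simp add: sum_distrib_left exp_sum J)
  have indep_exp: "indep_vars (\<lambda>_. borel) (\<lambda>j \<omega>. exp (l * X j \<omega>)) J"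
    by (rule indep_vars_compose2[OF indep]) auto
  note int_exp = integrable_exp_bernoulli[OF X_meas vals prob_one]
  show "integrable M (\<lambda>\<omega>. exp (l * (\<Sum>j\<in>J. X j \<omega>)))"
    unfolding prod_exp using indep_vars_integrable[OF J indep_exp int_exp] by simp
  have "expectation (\<lambda>\<omega>. exp (l * (\<Sum>j\<in>J. X j \<omega>))) = (\<Prod>j\<in>J. expectation (\<lambda>\<omega>. exp (l * X j \<omega>)))"
    unfolding prod_exp by (rule indep_vars_lebesgue_integral[OF J indep_exp int_exp])
  also have "\<dots> = (\<Prod>j\<in>J. 1 + (exp l - 1) * p j)"
    by (simp add: expectation_exp_bernoulli[OF X_meas vals prob_one])
  also have "\<dots> \<le> (\<Prod>j\<in>J. exp (p j * (exp l - 1)))"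
  proof (rule prod_mono)
    fix j assume "j \<in> J"
    then have "0 \<le> exp l * p j" "p j \<le> 1"
      using prob_one[of j] measure_nonneg prob_le_1 by (metis exp_ge_zero mult_nonneg_nonneg)+
    then show "0 \<le> 1 + (exp l - 1) * p j \<and> 1 + (exp l - 1) * p j \<le> exp (p j * (exp l - 1))"
      using exp_ge_add_one_self[of "p j * (exp l - 1)"] by (auto simp: algebra_simps)
  qed
  also have "\<dots> = exp ((\<Sum>j\<in>J. p j) * (exp l - 1))"
    by (simp add: exp_sum J sum_distrib_right)
  finally show "expectation (\<lambda>\<omega>. exp (l * (\<Sum>j\<in>J. X j \<omega>))) \<le> exp ((\<Sum>j\<in>J. p j) * (exp l - 1))" .
qed

lemma prob_sum_bernoulli_dev_le:
  fixes X :: "'i \<Rightarrow> 'a \<Rightarrow> real" and p :: "'i \<Rightarrow> real"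
  assumes J: "finite J" and indep: "indep_vars (\<lambda>_. borel) X J"
    and vals: "\<And>j. j \<in> J \<Longrightarrow> AE \<omega> in M. X j \<omega> \<in> {0, 1}"
    and prob_one: "\<And>j. j \<in> J \<Longrightarrow> prob {\<omega> \<in> space M. X j \<omega> = 1} = p j"
    and l: "\<bar>l\<bar> \<le> 1"
  shows "prob {\<omega> \<in> space M. a \<le> l * ((\<Sum>j\<in>J. X j \<omega>) - (\<Sum>j\<in>J. p j))}
           \<le> exp ((\<Sum>j\<in>J. p j) * l\<^sup>2 - a)"
proof -
  define \<mu> where "\<mu> = (\<Sum>j\<in>J. p j)"
  have "0 \<le> \<mu>"
    unfolding \<mu>_def using prob_one by (intro sum_nonneg) (metis measure_nonneg)
  have "{\<omega> \<in> space M. a \<le> l * ((\<Sum>j\<in>J. X j \<omega>) - \<mu>)}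
        = {\<omega> \<in> space M. exp (a + l * \<mu>) \<le> exp (l * (\<Sum>j\<in>J. X j \<omega>))}"
    by (auto simp: algebra_simps)
  also have "prob \<dots> \<le> expectation (\<lambda>\<omega>. exp (l * (\<Sum>j\<in>J. X j \<omega>))) / exp (a + l * \<mu>)"
    using integrable_exp_sum_bernoulli[OF J indep vals prob_one]
    by (intro integral_Markov_inequality_measure[where A="space M"]) auto
  also have "\<dots> \<le> exp (\<mu> * (exp l - 1)) / exp (a + l * \<mu>)"
    using expectation_exp_sum_bernoulli_le[OF J indep vals prob_one]
    unfolding \<mu>_def by (intro divide_right_mono) auto
  also have "\<dots> = exp (\<mu> * (exp l - 1 - l) - a)"
    by (simp add: exp_diff[symmetric] algebra_simps)
  also have "\<dots> \<le> exp (\<mu> * l\<^sup>2 - a)"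
    using exp_le_1_plus_self_plus_sq[OF l] \<open>0 \<le> \<mu>\<close> by (simp add: mult_left_mono)
  finally show ?thesis unfolding \<mu>_def .
qed

lemma prob_sum_bernoulli_abs_dev_le:
  fixes X :: "'i \<Rightarrow> 'a \<Rightarrow> real" and p :: "'i \<Rightarrow> real"
  assumes J: "finite J" and indep: "indep_vars (\<lambda>_. borel) X J"
    and vals: "\<And>j. j \<in> J \<Longrightarrow> AE \<omega> in M. X j \<omega> \<in> {0, 1}"
    and prob_one: "\<And>j. j \<in> J \<Longrightarrow> prob {\<omega> \<in> space M. X j \<omega> = 1} = p j"
    and mean_le: "(\<Sum>j\<in>J. p j) \<le> A" and l: "0 \<le> l" "l \<le> 1"
  shows "prob {\<omega> \<in> space M. t \<le> \<bar>(\<Sum>j\<in>J. X j \<omega>) - (\<Sum>j\<in>J. p j)\<bar>} \<le> 2 * exp (A * l\<^sup>2 - l * t)"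
proof -
  define D where "D \<omega> = (\<Sum>j\<in>J. X j \<omega>) - (\<Sum>j\<in>J. p j)" for \<omega>
  have [measurable]: "D \<in> borel_measurable M"
    using indep unfolding D_def indep_vars_def by (auto intro!: borel_measurable_diff borel_measurable_sum)
  have "l * t \<le> l * D \<omega> \<or> l * t \<le> - l * D \<omega>" if "t \<le> \<bar>D \<omega>\<bar>" for \<omega>
    using mult_left_mono[OF that l(1)] by (cases "0 \<le> D \<omega>") auto
  then have "{\<omega> \<in> space M. t \<le> \<bar>D \<omega>\<bar>}
        \<subseteq> {\<omega> \<in> space M. l * t \<le> l * D \<omega>} \<union> {\<omega> \<in> space M. l * t \<le> - l * D \<omega>}"
    by auto
  then have "prob {\<omega> \<in> space M. t \<le> \<bar>D \<omega>\<bar>}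
             \<le> prob {\<omega> \<in> space M. l * t \<le> l * D \<omega>} + prob {\<omega> \<in> space M. l * t \<le> - l * D \<omega>}"
    by (intro order_trans[OF finite_measure_mono measure_Un_le]) auto
  also have "\<dots> \<le> exp ((\<Sum>j\<in>J. p j) * l\<^sup>2 - l * t) + exp ((\<Sum>j\<in>J. p j) * (- l)\<^sup>2 - l * t)"
    unfolding D_def using l by (intro add_mono prob_sum_bernoulli_dev_le[OF J indep vals prob_one]) auto
  also have "\<dots> \<le> 2 * exp (A * l\<^sup>2 - l * t)"
    using mean_le by (auto intro: mult_right_mono)
  finally show ?thesis unfolding D_def .
qed

end

section \<open>Step functions on the equispaced partition\<close>

lemma cell_subset_unit_interval: "i < n \<Longrightarrow> cell n i \<subseteq> {0..1}"
proof
  fix x assume "i < n" "x \<in> cell n i"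
  then have "0 \<le> real i / real n" "real i / real n < x" "x \<le> real (Suc i) / real n"
      "real (Suc i) / real n \<le> 1"
    by (auto simp: cell_def)
  then show "x \<in> {0..1}" unfolding atLeastAtMost_iff by linarith
qed

lemma cell_disjoint:
  assumes "x \<in> cell n i" "x \<in> cell n j"
  shows "i = j"
proof -
  have False if "a < b" "x \<in> cell n a" "x \<in> cell n b" for a b
  proof -
    have "real (Suc a) / real n \<le> real b / real n" using that(1) by (simp add: divide_right_mono)
    with that(2,3) show False by (auto simp: cell_def)
  qed
  then show ?thesis using assms by (cases i j rule: linorder_cases) auto
qed

lemma right_end_in_cell: "i < n \<Longrightarrow> real (Suc i) / real n \<in> cell n i"
  by (auto simp: cell_def divide_strict_right_mono)

lemma cell_borel [measurable]: "cell n i \<in> sets borel"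
  by (simp add: cell_def)

lemma emeasure_cell: "0 < n \<Longrightarrow> emeasure lborel (cell n i) = ennreal (1 / real n)"
  by (simp add: cell_def divide_right_mono diff_divide_distrib[symmetric])

lemma sum_indicator_cell:
  fixes f :: "nat \<Rightarrow> 'b::semiring_1"
  assumes "j < n" "y \<in> cell n j"
  shows "(\<Sum>k<n. f k * indicator (cell n k) y) = f j"
proof -
  have "(\<Sum>k\<in>{..<n} - {j}. f k * indicator (cell n k) y) = 0"
    by (intro sum.neutral) (auto simp: indicator_def dest: cell_disjoint[OF assms(2)])
  moreover have "(\<Sum>k<n. f k * indicator (cell n k) y)
      = f j * indicator (cell n j) y + (\<Sum>k\<in>{..<n} - {j}. f k * indicator (cell n k) y)"
    using assms(1) by (intro sum.remove) auto
  ultimately show ?thesis using assms(2) by simp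
qed

lemma In_cell:
  assumes "i < n" "j < n" "x \<in> cell n i" "y \<in> cell n j"
  shows "In n M x y = M i j"
proof -
  have "In n M x y = (\<Sum>k<n. (\<Sum>l<n. M k l * indicator (cell n l) y) * indicator (cell n k) x)"
    unfolding In_def sum_distrib_right by (intro sum.cong refl) (simp add: mult_ac)
  also have "\<dots> = M i j"
    by (simp only: sum_indicator_cell[OF assms(2,4)] sum_indicator_cell[OF assms(1,3)])
  finally show ?thesis .
qed

lemma In_outside_cells: "(\<forall>i<n. x \<notin> cell n i) \<or> (\<forall>j<n. y \<notin> cell n j) \<Longrightarrow> In n M x y = 0"
  unfolding In_def by (auto intro!: sum.neutral)

lemma In_measurable [measurable]: "(\<lambda>y. In n M x y) \<in> borel_measurable borel"
  unfolding In_def by measurable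

definition row_norm :: "nat \<Rightarrow> (nat \<Rightarrow> nat \<Rightarrow> real) \<Rightarrow> nat \<Rightarrow> real" where
  "row_norm n M i = (\<Sum>j<n. \<bar>M i j\<bar>) / real n"

lemma nn_integral_In_row:
  assumes i: "i < n" and x: "x \<in> cell n i"
  shows "(\<integral>\<^sup>+ y\<in>{0..1}. ennreal \<bar>In n M x y\<bar> \<partial>lborel) = ennreal (row_norm n M i)"
proof -
  have integrand: "ennreal \<bar>In n M x y\<bar> * indicator {0..1} y
                   = (\<Sum>j<n. ennreal \<bar>M i j\<bar> * indicator (cell n j) y)" for y
  proof (cases "\<exists>j<n. y \<in> cell n j")
    case True
    then obtain j where j: "j < n" "y \<in> cell n j" by auto
    then have "y \<in> {0..1}" using cell_subset_unit_interval by blast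
    then show ?thesis using j In_cell[OF i j(1) x j(2)] by (simp add: sum_indicator_cell[OF j])
  next
    case False
    then show ?thesis using In_outside_cells[of n x y M] by (auto intro!: sum.neutral)
  qed
  have "(\<integral>\<^sup>+ y\<in>{0..1}. ennreal \<bar>In n M x y\<bar> \<partial>lborel)
        = (\<integral>\<^sup>+ y. (\<Sum>j<n. ennreal \<bar>M i j\<bar> * indicator (cell n j) y) \<partial>lborel)"
    by (simp only: integrand)
  also have "\<dots> = (\<Sum>j<n. ennreal \<bar>M i j\<bar> * emeasure lborel (cell n j))"
    by (subst nn_integral_sum) (auto simp: nn_integral_cmult_indicator)
  also have "\<dots> = ennreal (row_norm n M i)"
    using i by (simp add: emeasure_cell ennreal_mult[symmetric] row_norm_def sum_divide_distrib)
  finally show ?thesis .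
qed

lemma Linf1_In: "0 < n \<Longrightarrow> Linf1 (In n M) = Max (row_norm n M ` {..<n})"
proof -
  assume "0 < n"
  then obtain i where i: "i < n" "Max (row_norm n M ` {..<n}) = row_norm n M i"
    using Max_in[of "row_norm n M ` {..<n}"] by fastforce
  have row_le: "row_norm n M k \<le> row_norm n M i" if "k < n" for k
    using that by (simp flip: i(2))
  have row_int_le: "(\<integral>\<^sup>+ y\<in>{0..1}. ennreal \<bar>In n M x y\<bar> \<partial>lborel) \<le> ennreal (row_norm n M i)" for x
  proof (cases "\<exists>k<n. x \<in> cell n k")
    case True
    then obtain k where k: "k < n" "x \<in> cell n k" by auto
    show ?thesis unfolding nn_integral_In_row[OF k] using row_le[OF k(1)] by (rule ennreal_leI)
  next
    case False
    then have "In n M x y = 0" for y by (simp add: In_outside_cells)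
    then show ?thesis by simp
  qed
  have "(SUP x\<in>{0..1}. \<integral>\<^sup>+ y\<in>{0..1}. ennreal \<bar>In n M x y\<bar> \<partial>lborel) = ennreal (row_norm n M i)"
  proof (rule antisym)
    show "(SUP x\<in>{0..1}. \<integral>\<^sup>+ y\<in>{0..1}. ennreal \<bar>In n M x y\<bar> \<partial>lborel) \<le> ennreal (row_norm n M i)"
      by (rule SUP_least) (rule row_int_le)
    have "real (Suc i) / real n \<in> {0..1}"
      using right_end_in_cell[OF i(1)] cell_subset_unit_interval[OF i(1)] by blast
    then show "ennreal (row_norm n M i) \<le> (SUP x\<in>{0..1}. \<integral>\<^sup>+ y\<in>{0..1}. ennreal \<bar>In n M x y\<bar> \<partial>lborel)"
      unfolding nn_integral_In_row[OF i(1) right_end_in_cell[OF i(1)], symmetric] by (rule SUP_upper)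
  qed
  moreover have "0 \<le> row_norm n M i" by (simp add: row_norm_def sum_nonneg)
  ultimately show ?thesis unfolding Linf1_def i(2) by simp
qed

lemma abs_Max_image_diff_le:
  fixes f g :: "'i \<Rightarrow> real"
  assumes "finite A" "A \<noteq> {}" and "\<And>i. i \<in> A \<Longrightarrow> \<bar>f i - g i\<bar> \<le> e"
  shows "\<bar>Max (f ` A) - Max (g ` A)\<bar> \<le> e"
proof -
  obtain i where "i \<in> A" "Max (f ` A) = f i"
    using Max_in[of "f ` A"] assms(1,2) by fastforce
  moreover obtain k where "k \<in> A" "Max (g ` A) = g k"
    using Max_in[of "g ` A"] assms(1,2) by fastforce
  moreover have "g i \<le> Max (g ` A)" "f k \<le> Max (f ` A)"
    using \<open>i \<in> A\<close> \<open>k \<in> A\<close> assms(1) by auto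
  ultimately show ?thesis using assms(3)[of i] assms(3)[of k] by linarith
qed

lemma abs_Linf1_In_diff_le:
  assumes "0 < n" and "\<And>i. i < n \<Longrightarrow> \<bar>row_norm n M i - row_norm n N i\<bar> \<le> e"
  shows "\<bar>Linf1 (In n M) - Linf1 (In n N)\<bar> \<le> e"
  unfolding Linf1_In[OF assms(1)] by (rule abs_Max_image_diff_le) (use assms in auto)

lemma In_min_const:
  assumes "0 \<le> R"
  shows "In n (\<lambda>i j. min (M i j) R) x y = min (In n M x y) R"
proof (cases "(\<exists>i<n. x \<in> cell n i) \<and> (\<exists>j<n. y \<in> cell n j)")
  case True
  then obtain i j where "i < n" "j < n" "x \<in> cell n i" "y \<in> cell n j" by auto
  then show ?thesis by (simp add: In_cell)
next
  case False
  then show ?thesis using assms In_outside_cells[of n x y] by auto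
qed

lemma abs_In_le_sum_abs: "\<bar>In n M x y\<bar> \<le> (\<Sum>i<n. \<Sum>j<n. \<bar>M i j\<bar>)"
proof (cases "(\<exists>i<n. x \<in> cell n i) \<and> (\<exists>j<n. y \<in> cell n j)")
  case True
  then obtain i j where ij: "i < n" "j < n" "x \<in> cell n i" "y \<in> cell n j" by auto
  have "\<bar>M i j\<bar> \<le> (\<Sum>j<n. \<bar>M i j\<bar>)" using ij by (intro member_le_sum) auto
  also have "\<dots> \<le> (\<Sum>i<n. \<Sum>j<n. \<bar>M i j\<bar>)" using ij by (intro member_le_sum sum_nonneg) auto
  finally show ?thesis using ij by (simp add: In_cell)
next
  case False
  then show ?thesis using In_outside_cells[of n x y M] by (auto intro!: sum_nonneg)
qed

section \<open>Continuity of the \<open>L\<^sup>\<infinity>\<^sup>,\<^sup>1\<close> norm\<close>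

lemma set_borel_measurable_In:
  assumes [measurable]: "S \<in> sets borel"
  shows "set_borel_measurable lborel S (In n M x)"
  unfolding set_borel_measurable_def measurable_lborel1 by measurable

lemma set_borel_measurable_diff:
  fixes f g :: "'b \<Rightarrow> real"
  assumes "set_borel_measurable M S f" "set_borel_measurable M S g"
  shows "set_borel_measurable M S (\<lambda>y. f y - g y)"
  using borel_measurable_diff[OF assms[unfolded set_borel_measurable_def]]
  by (simp add: set_borel_measurable_def right_diff_distrib)

lemma set_nn_integral_abs_le_add:
  fixes f g h :: "'b \<Rightarrow> real"
  assumes "set_borel_measurable M S f" "set_borel_measurable M S g"
    and "\<And>y. y \<in> S \<Longrightarrow> \<bar>h y\<bar> \<le> \<bar>f y\<bar> + \<bar>g y\<bar>"
  shows "(\<integral>\<^sup>+ y\<in>S. ennreal \<bar>h y\<bar> \<partial>M)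
         \<le> (\<integral>\<^sup>+ y\<in>S. ennreal \<bar>f y\<bar> \<partial>M) + (\<integral>\<^sup>+ y\<in>S. ennreal \<bar>g y\<bar> \<partial>M)"
proof -
  have meas: "(\<lambda>y. ennreal \<bar>u y\<bar> * indicator S y) \<in> borel_measurable M"
    if "set_borel_measurable M S u" for u :: "'b \<Rightarrow> real"
  proof -
    have "(\<lambda>y. ennreal \<bar>indicator S y *\<^sub>R u y\<bar>) \<in> borel_measurable M"
      using that unfolding set_borel_measurable_def by measurable
    then show ?thesis by (rule measurable_cong[THEN iffD1, rotated]) (simp add: indicator_def)
  qed
  have "(\<integral>\<^sup>+ y\<in>S. ennreal \<bar>h y\<bar> \<partial>M)
        \<le> (\<integral>\<^sup>+ y. ennreal \<bar>f y\<bar> * indicator S y + ennreal \<bar>g y\<bar> * indicator S y \<partial>M)"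
  proof (rule nn_integral_mono)
    fix y
    have "y \<in> S \<Longrightarrow> ennreal \<bar>h y\<bar> \<le> ennreal \<bar>f y\<bar> + ennreal \<bar>g y\<bar>"
      using assms(3) by (simp add: ennreal_plus[symmetric] ennreal_leI del: ennreal_plus)
    then show "ennreal \<bar>h y\<bar> * indicator S y \<le> ennreal \<bar>f y\<bar> * indicator S y + ennreal \<bar>g y\<bar> * indicator S y"
      by (cases "y \<in> S") simp_all
  qed
  also have "\<dots> = (\<integral>\<^sup>+ y\<in>S. ennreal \<bar>f y\<bar> \<partial>M) + (\<integral>\<^sup>+ y\<in>S. ennreal \<bar>g y\<bar> \<partial>M)"
    using meas assms(1,2) by (intro nn_integral_add) auto
  finally show ?thesis .
qed

definition Linf1_ennreal :: "(real \<Rightarrow> real \<Rightarrow> real) \<Rightarrow> ennreal" where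
  "Linf1_ennreal F = (SUP x\<in>{0..1}. \<integral>\<^sup>+ y\<in>{0..1}. ennreal \<bar>F x y\<bar> \<partial>lborel)"

lemma Linf1_ennreal_nonneg:
  assumes "\<And>x y. x \<in> {0..1} \<Longrightarrow> y \<in> {0..1} \<Longrightarrow> 0 \<le> K x y"
  shows "Linf1_ennreal K = (SUP x\<in>{0..1}. \<integral>\<^sup>+ y\<in>{0..1}. ennreal (K x y) \<partial>lborel)"
  unfolding Linf1_ennreal_def using assms
  by (intro SUP_cong refl nn_integral_cong) (auto simp: indicator_def)

lemma Linf1_ennreal_le_add:
  assumes "\<And>x. x \<in> {0..1} \<Longrightarrow> set_borel_measurable lborel {0..1} (F x)"
    and "\<And>x. x \<in> {0..1} \<Longrightarrow> set_borel_measurable lborel {0..1} (G x)"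
    and "\<And>x. x \<in> {0..1} \<Longrightarrow> (\<integral>\<^sup>+ y\<in>{0..1}. ennreal \<bar>F x y - G x y\<bar> \<partial>lborel) \<le> e"
  shows "Linf1_ennreal F \<le> Linf1_ennreal G + e"
  unfolding Linf1_ennreal_def
proof (rule SUP_least)
  fix x :: real assume x: "x \<in> {0..1}"
  have "(\<integral>\<^sup>+ y\<in>{0..1}. ennreal \<bar>F x y\<bar> \<partial>lborel)
        \<le> (\<integral>\<^sup>+ y\<in>{0..1}. ennreal \<bar>G x y\<bar> \<partial>lborel) + (\<integral>\<^sup>+ y\<in>{0..1}. ennreal \<bar>F x y - G x y\<bar> \<partial>lborel)"
    using assms(1,2)[OF x] by (intro set_nn_integral_abs_le_add set_borel_measurable_diff) auto
  also have "\<dots> \<le> (SUP x\<in>{0..1}. \<integral>\<^sup>+ y\<in>{0..1}. ennreal \<bar>G x y\<bar> \<partial>lborel) + e"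
    using x assms(3)[OF x] by (intro add_mono SUP_upper)
  finally show "(\<integral>\<^sup>+ y\<in>{0..1}. ennreal \<bar>F x y\<bar> \<partial>lborel)
                \<le> (SUP x\<in>{0..1}. \<integral>\<^sup>+ y\<in>{0..1}. ennreal \<bar>G x y\<bar> \<partial>lborel) + e" .
qed

lemma abs_Linf1_diff_le:
  assumes F: "\<And>x. x \<in> {0..1} \<Longrightarrow> set_borel_measurable lborel {0..1} (F x)"
    and G: "\<And>x. x \<in> {0..1} \<Longrightarrow> set_borel_measurable lborel {0..1} (G x)"
    and dist: "\<And>x. x \<in> {0..1} \<Longrightarrow> (\<integral>\<^sup>+ y\<in>{0..1}. ennreal \<bar>F x y - G x y\<bar> \<partial>lborel) \<le> ennreal e"
    and "0 \<le> e" and G_fin: "Linf1_ennreal G < \<infinity>"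
  shows "\<bar>Linf1 F - Linf1 G\<bar> \<le> e"
proof -
  have FG: "Linf1_ennreal F \<le> Linf1_ennreal G + ennreal e"
    using F G dist by (rule Linf1_ennreal_le_add)
  have "(\<integral>\<^sup>+ y\<in>{0..1}. ennreal \<bar>G x y - F x y\<bar> \<partial>lborel) \<le> ennreal e" if "x \<in> {0..1}" for x
    using dist[OF that] by (simp add: abs_minus_commute)
  with G F have GF: "Linf1_ennreal G \<le> Linf1_ennreal F + ennreal e"
    by (rule Linf1_ennreal_le_add)
  have G_fin': "Linf1_ennreal G + ennreal e < top"
    using G_fin by (simp add: ennreal_add_less_top)
  then have F_fin: "Linf1_ennreal F < top"
    using FG by (rule le_less_trans[rotated])
  have F_fin': "Linf1_ennreal F + ennreal e < top"
    using F_fin by (simp add: ennreal_add_less_top)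
  have "enn2real (Linf1_ennreal G) \<le> enn2real (Linf1_ennreal F) + e"
    using enn2real_mono[OF GF F_fin'] F_fin \<open>0 \<le> e\<close> by (simp add: enn2real_plus)
  moreover have "enn2real (Linf1_ennreal F) \<le> enn2real (Linf1_ennreal G) + e"
    using enn2real_mono[OF FG G_fin'] G_fin \<open>0 \<le> e\<close> by (simp add: enn2real_plus)
  ultimately show ?thesis unfolding Linf1_def Linf1_ennreal_def[symmetric] by linarith
qed

lemma set_nn_integral_In_min_dist_le:
  fixes f :: "real \<Rightarrow> real"
  assumes f: "set_borel_measurable lborel {0..1} f" and R: "(\<Sum>i<m. \<Sum>j<m. \<bar>B i j\<bar>) \<le> R"
  shows "(\<integral>\<^sup>+ y\<in>{0..1}. ennreal \<bar>In n (\<lambda>i j. min (A i j) R) x y - f y\<bar> \<partial>lborel)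
         \<le> (\<integral>\<^sup>+ y\<in>{0..1}. ennreal \<bar>In n A x y - f y\<bar> \<partial>lborel)
            + (\<integral>\<^sup>+ y\<in>{0..1}. ennreal \<bar>In m B x y - f y\<bar> \<partial>lborel)"
proof (rule set_nn_integral_abs_le_add)
  fix y
  have "0 \<le> (\<Sum>i<m. \<Sum>j<m. \<bar>B i j\<bar>)" by (intro sum_nonneg) auto
  then have "0 \<le> R" using R by linarith
  have "In m B x y \<le> R" using abs_In_le_sum_abs[of m B x y] R by linarith
  then show "\<bar>In n (\<lambda>i j. min (A i j) R) x y - f y\<bar> \<le> \<bar>In n A x y - f y\<bar> + \<bar>In m B x y - f y\<bar>"
    unfolding In_min_const[OF \<open>0 \<le> R\<close>] by (simp add: min_def abs_if)
qed (intro set_borel_measurable_diff set_borel_measurable_In f, simp)+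

lemma Linf1_In_truncated_tendsto:
  fixes K :: "real \<Rightarrow> real \<Rightarrow> real" and A :: "nat \<Rightarrow> nat \<Rightarrow> nat \<Rightarrow> real" and R :: "nat \<Rightarrow> real"
  assumes K_meas: "\<And>x. x \<in> {0..1} \<Longrightarrow> set_borel_measurable lborel {0..1} (K x)"
    and K_fin: "Linf1_ennreal K < \<infinity>"
    and approx: "\<forall>\<epsilon>>0. \<exists>N. \<forall>n\<ge>N. \<forall>x\<in>{0..1}.
                   (\<integral>\<^sup>+ y\<in>{0..1}. ennreal \<bar>In n (A n) x y - K x y\<bar> \<partial>lborel) < ennreal \<epsilon>"
    and R: "filterlim R at_top sequentially"
  shows "(\<lambda>n. Linf1 (In n (\<lambda>i j. min (A n i j) (R n)))) \<longlonglongrightarrow> Linf1 K"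
proof (rule LIMSEQ_I)
  fix e :: real assume "0 < e"
  then obtain N where N: "\<And>n x. n \<ge> N \<Longrightarrow> x \<in> {0..1} \<Longrightarrow>
      (\<integral>\<^sup>+ y\<in>{0..1}. ennreal \<bar>In n (A n) x y - K x y\<bar> \<partial>lborel) < ennreal (e / 3)"
    using approx by (meson divide_pos_pos zero_less_numeral)
  obtain N' where N': "\<And>n. n \<ge> N' \<Longrightarrow> (\<Sum>i<N. \<Sum>j<N. \<bar>A N i j\<bar>) \<le> R n"
    using filterlim_at_top[THEN iffD1, OF R] by (auto simp: eventually_sequentially)
  have bound: "\<bar>Linf1 (In n (\<lambda>i j. min (A n i j) (R n))) - Linf1 K\<bar> \<le> 2 * (e / 3)"
    if n: "n \<ge> max N N'" for n
  proof (rule abs_Linf1_diff_le[OF set_borel_measurable_In K_meas _ _ K_fin])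
    fix x :: real assume x: "x \<in> {0..1}"
    have "(\<integral>\<^sup>+ y\<in>{0..1}. ennreal \<bar>In n (\<lambda>i j. min (A n i j) (R n)) x y - K x y\<bar> \<partial>lborel)
          \<le> (\<integral>\<^sup>+ y\<in>{0..1}. ennreal \<bar>In n (A n) x y - K x y\<bar> \<partial>lborel)
             + (\<integral>\<^sup>+ y\<in>{0..1}. ennreal \<bar>In N (A N) x y - K x y\<bar> \<partial>lborel)"
      using n by (intro set_nn_integral_In_min_dist_le K_meas[OF x] N') auto
    also have "\<dots> \<le> ennreal (e / 3) + ennreal (e / 3)"
      using N[OF _ x, of n] N[OF _ x, of N] n by (intro add_mono) auto
    finally show "(\<integral>\<^sup>+ y\<in>{0..1}. ennreal \<bar>In n (\<lambda>i j. min (A n i j) (R n)) x y - K x y\<bar> \<partial>lborel)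
                  \<le> ennreal (2 * (e / 3))"
      using \<open>0 < e\<close> by (simp add: ennreal_plus[symmetric] del: ennreal_plus)
  qed (use \<open>0 < e\<close> in auto)
  show "\<exists>n0. \<forall>n\<ge>n0. norm (Linf1 (In n (\<lambda>i j. min (A n i j) (R n))) - Linf1 K) < e"
  proof (intro exI allI impI)
    fix n assume "max N N' \<le> n"
    with bound \<open>0 < e\<close> show "norm (Linf1 (In n (\<lambda>i j. min (A n i j) (R n))) - Linf1 K) < e"
      by fastforce
  qed
qed

section \<open>Row sums of \<open>P\<^sub>n K\<close>\<close>

lemma zero_extension_measurable:
  fixes K :: "real \<Rightarrow> real \<Rightarrow> real"
  assumes "(\<lambda>(x, y). K x y) \<in> borel_measurable (restrict_space (lborel \<Otimes>\<^sub>M lborel) ({0..1} \<times> {0..1}))"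
  shows "(\<lambda>z. indicator ({0..1} \<times> {0..1}) z * K (fst z) (snd z)) \<in> borel_measurable lborel"
proof -
  have "({0..1::real} \<times> {0..1::real}) \<inter> space (lborel \<Otimes>\<^sub>M lborel) \<in> sets (lborel \<Otimes>\<^sub>M lborel)"
    by (simp add: space_pair_measure)
  from borel_measurable_restrict_space_iff[OF this] assms
  have "(\<lambda>z. indicator ({0..1} \<times> {0..1}) z *\<^sub>R (case z of (x, y) \<Rightarrow> K x y)) \<in> borel_measurable (lborel \<Otimes>\<^sub>M lborel)"
    by blast
  then show ?thesis by (simp add: case_prod_beta lborel_prod)
qed

lemma set_borel_measurable_section:
  fixes K :: "real \<Rightarrow> real \<Rightarrow> real"
  assumes "(\<lambda>(x, y). K x y) \<in> borel_measurable (restrict_space (lborel \<Otimes>\<^sub>M lborel) ({0..1} \<times> {0..1}))"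
    and "x \<in> {0..1}"
  shows "set_borel_measurable lborel {0..1} (K x)"
proof -
  have "(\<lambda>y. indicator ({0..1} \<times> {0..1}) (x, y) * K x y) \<in> borel_measurable lborel"
    using measurable_Pair2[OF zero_extension_measurable[OF assms(1), folded lborel_prod], of x] by simp
  moreover have "(\<lambda>y. indicator ({0..1} \<times> {0..1}) (x, y) * K x y) = (\<lambda>y. indicator {0..1} y *\<^sub>R K x y)"
    using assms(2) by (auto simp: indicator_def)
  ultimately show ?thesis unfolding set_borel_measurable_def by simp
qed

lemma sum_set_nn_integral_cells_le:
  fixes g :: "real \<times> real \<Rightarrow> ennreal"
  assumes [measurable]: "g \<in> borel_measurable lborel" "A \<in> sets borel"
  shows "(\<Sum>j<n. \<integral>\<^sup>+ z\<in>A \<times> cell n j. g z \<partial>lborel) \<le> (\<integral>\<^sup>+ z\<in>A \<times> {0..1}. g z \<partial>lborel)"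
proof -
  have pointwise: "(\<Sum>j<n. g (x, y) * indicator (A \<times> cell n j) (x, y))
                   \<le> g (x, y) * indicator (A \<times> {0..1}) (x, y)" for x y
  proof -
    have "(\<Sum>j<n. g (x, y) * indicator (A \<times> cell n j) (x, y))
          = (\<Sum>j<n. (g (x, y) * indicator A x) * indicator (cell n j) y)"
      by (simp add: indicator_times mult.assoc)
    also have "\<dots> \<le> g (x, y) * indicator (A \<times> {0..1}) (x, y)"
    proof (cases "\<exists>j<n. y \<in> cell n j")
      case True
      then obtain j where j: "j < n" "y \<in> cell n j" by auto
      then have "y \<in> {0..1}" using cell_subset_unit_interval by blast
      then show ?thesis by (simp add: sum_indicator_cell[OF j] indicator_times)
    qed auto
    finally show ?thesis .
  qed
  have "(\<Sum>j<n. \<integral>\<^sup>+ z\<in>A \<times> cell n j. g z \<partial>lborel)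
        = (\<integral>\<^sup>+ z. (\<Sum>j<n. g z * indicator (A \<times> cell n j) z) \<partial>lborel)"
  proof (rule nn_integral_sum[symmetric])
    fix j
    have [measurable]: "A \<times> cell n j \<in> sets (borel :: (real \<times> real) measure)"
      by (metis borel_prod pair_measureI assms(2) cell_borel)
    show "(\<lambda>z. g z * indicator (A \<times> cell n j) z) \<in> borel_measurable lborel"
      unfolding measurable_lborel1 by measurable
  qed
  also have "\<dots> \<le> (\<integral>\<^sup>+ z\<in>A \<times> {0..1}. g z \<partial>lborel)"
    by (rule nn_integral_mono) (simp only: split_paired_all pointwise)
  finally show ?thesis .
qed

lemma set_nn_integral_times_le:
  fixes g :: "real \<times> real \<Rightarrow> ennreal"
  assumes [measurable]: "g \<in> borel_measurable lborel" "A \<in> sets borel" "B \<in> sets borel"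
    and section_le: "\<And>x. x \<in> A \<Longrightarrow> (\<integral>\<^sup>+ y\<in>B. g (x, y) \<partial>lborel) \<le> C"
  shows "(\<integral>\<^sup>+ z\<in>A \<times> B. g z \<partial>lborel) \<le> C * emeasure lborel A"
proof -
  have [measurable]: "g \<in> borel_measurable (lborel \<Otimes>\<^sub>M lborel)"
    by (simp add: lborel_prod)
  have [measurable]: "A \<times> B \<in> sets (lborel \<Otimes>\<^sub>M lborel)"
    by (intro pair_measureI) auto
  have "(\<integral>\<^sup>+ z\<in>A \<times> B. g z \<partial>lborel) = (\<integral>\<^sup>+ x. \<integral>\<^sup>+ y. g (x, y) * indicator (A \<times> B) (x, y) \<partial>lborel \<partial>lborel)"
    unfolding lborel_prod[symmetric] by (rule lborel.nn_integral_fst[symmetric]) measurable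
  also have "\<dots> \<le> (\<integral>\<^sup>+ x. C * indicator A x \<partial>lborel)"
  proof (rule nn_integral_mono)
    fix x
    show "(\<integral>\<^sup>+ y. g (x, y) * indicator (A \<times> B) (x, y) \<partial>lborel) \<le> C * indicator A x"
      using section_le[of x] by (cases "x \<in> A") (simp_all add: indicator_times)
  qed
  also have "\<dots> = C * emeasure lborel A"
    by (simp add: nn_integral_cmult_indicator)
  finally show ?thesis .
qed

lemma Pn_eq_nn_integral:
  fixes K :: "real \<Rightarrow> real \<Rightarrow> real"
  assumes K_meas: "(\<lambda>(x, y). K x y) \<in> borel_measurable (restrict_space (lborel \<Otimes>\<^sub>M lborel) ({0..1} \<times> {0..1}))"
    and K_nonneg: "\<And>x y. x \<in> {0..1} \<Longrightarrow> y \<in> {0..1} \<Longrightarrow> 0 \<le> K x y"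
    and ij: "i < n" "j < n"
  shows "Pn n K i j = (real n)\<^sup>2 *
           enn2real (\<integral>\<^sup>+ z\<in>cell n i \<times> cell n j. ennreal (indicator ({0..1} \<times> {0..1}) z * K (fst z) (snd z)) \<partial>lborel)"
proof -
  define K0 where "K0 z = indicator ({0..1} \<times> {0..1}) z * K (fst z) (snd z)" for z :: "real \<times> real"
  have [measurable]: "K0 \<in> borel_measurable lborel"
    unfolding K0_def by (rule zero_extension_measurable[OF K_meas])
  have [measurable]: "cell n i \<times> cell n j \<in> sets (lborel :: (real \<times> real) measure)"
    by (metis borel_prod pair_measureI cell_borel sets_lborel)
  have on_cells: "indicator (cell n i \<times> cell n j) z * K (fst z) (snd z) = indicator (cell n i \<times> cell n j) z * K0 z" for z
    using cell_subset_unit_interval[OF ij(1)] cell_subset_unit_interval[OF ij(2)]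
    by (auto simp: K0_def indicator_def)
  have "(LINT z : cell n i \<times> cell n j | lborel. K (fst z) (snd z))
        = (\<integral> z. indicator (cell n i \<times> cell n j) z * K0 z \<partial>lborel)"
    unfolding set_lebesgue_integral_def by (simp add: on_cells)
  also have "\<dots> = enn2real (\<integral>\<^sup>+ z. ennreal (indicator (cell n i \<times> cell n j) z * K0 z) \<partial>lborel)"
  proof (rule integral_eq_nn_integral)
    show "(\<lambda>z. indicator (cell n i \<times> cell n j) z * K0 z) \<in> borel_measurable lborel"
      by measurable
    show "AE z in lborel. 0 \<le> indicator (cell n i \<times> cell n j) z * K0 z"
      using K_nonneg by (auto simp: K0_def indicator_def)
  qed
  also have "\<dots> = enn2real (\<integral>\<^sup>+ z\<in>cell n i \<times> cell n j. ennreal (K0 z) \<partial>lborel)"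
    by (intro arg_cong[where f=enn2real] nn_integral_cong) (simp add: indicator_def)
  finally show ?thesis unfolding Pn_def K0_def by simp
qed

lemma sum_nn_integral_row_cells_le:
  fixes K :: "real \<Rightarrow> real \<Rightarrow> real"
  assumes K_meas: "(\<lambda>(x, y). K x y) \<in> borel_measurable (restrict_space (lborel \<Otimes>\<^sub>M lborel) ({0..1} \<times> {0..1}))"
    and i: "i < n"
  shows "(\<Sum>j<n. \<integral>\<^sup>+ z\<in>cell n i \<times> cell n j. ennreal (indicator ({0..1} \<times> {0..1}) z * K (fst z) (snd z)) \<partial>lborel)
         \<le> (SUP x\<in>{0..1}. \<integral>\<^sup>+ y\<in>{0..1}. ennreal (K x y) \<partial>lborel) * ennreal (1 / real n)"
    (is "(\<Sum>j<n. \<integral>\<^sup>+ z\<in>_. ?g z \<partial>lborel) \<le> ?C * _")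
proof -
  have [measurable]: "?g \<in> borel_measurable lborel"
    using zero_extension_measurable[OF K_meas] by measurable
  have "(\<Sum>j<n. \<integral>\<^sup>+ z\<in>cell n i \<times> cell n j. ?g z \<partial>lborel) \<le> (\<integral>\<^sup>+ z\<in>cell n i \<times> {0..1}. ?g z \<partial>lborel)"
    by (rule sum_set_nn_integral_cells_le) auto
  also have "\<dots> \<le> ?C * emeasure lborel (cell n i)"
  proof (rule set_nn_integral_times_le)
    fix x assume "x \<in> cell n i"
    then have x: "x \<in> {0..1}" using cell_subset_unit_interval[OF i] by blast
    then have "(\<integral>\<^sup>+ y\<in>{0..1}. ?g (x, y) \<partial>lborel) = (\<integral>\<^sup>+ y\<in>{0..1}. ennreal (K x y) \<partial>lborel)"
      by (intro nn_integral_cong) (simp add: indicator_def)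
    also have "\<dots> \<le> ?C" using x by (rule SUP_upper)
    finally show "(\<integral>\<^sup>+ y\<in>{0..1}. ?g (x, y) \<partial>lborel) \<le> ?C" .
  qed auto
  also have "\<dots> = ?C * ennreal (1 / real n)"
    using i by (simp add: emeasure_cell)
  finally show ?thesis .
qed

lemma sum_Pn_row_le:
  fixes K :: "real \<Rightarrow> real \<Rightarrow> real"
  assumes K_meas: "(\<lambda>(x, y). K x y) \<in> borel_measurable (restrict_space (lborel \<Otimes>\<^sub>M lborel) ({0..1} \<times> {0..1}))"
    and K_nonneg: "\<And>x y. x \<in> {0..1} \<Longrightarrow> y \<in> {0..1} \<Longrightarrow> 0 \<le> K x y"
    and K_bdd: "(SUP x\<in>{0..1}. \<integral>\<^sup>+ y\<in>{0..1}. ennreal (K x y) \<partial>lborel) < \<infinity>"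
    and i: "i < n"
  shows "(\<Sum>j<n. Pn n K i j) \<le> real n * enn2real (SUP x\<in>{0..1}. \<integral>\<^sup>+ y\<in>{0..1}. ennreal (K x y) \<partial>lborel)"
proof -
  define C where "C = (SUP x\<in>{0..1}. \<integral>\<^sup>+ y\<in>{0..1}. ennreal (K x y) \<partial>lborel)"
  define I where "I j = (\<integral>\<^sup>+ z\<in>cell n i \<times> cell n j.
                            ennreal (indicator ({0..1} \<times> {0..1}) z * K (fst z) (snd z)) \<partial>lborel)" for j
  have sum_I: "(\<Sum>j<n. I j) \<le> C * ennreal (1 / real n)"
    unfolding I_def C_def by (rule sum_nn_integral_row_cells_le[OF K_meas i])
  have C_fin: "C * ennreal (1 / real n) < top"
    using K_bdd unfolding C_def by (simp add: ennreal_mult_less_top)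
  have I_fin: "I j < top" if "j < n" for j
    using member_le_sum[of j "{..<n}" I] that sum_I C_fin by (simp add: order_le_less_trans)
  have "(\<Sum>j<n. Pn n K i j) = (\<Sum>j<n. (real n)\<^sup>2 * enn2real (I j))"
    using Pn_eq_nn_integral[OF K_meas K_nonneg i] by (intro sum.cong) (simp_all add: I_def)
  also have "\<dots> = (real n)\<^sup>2 * enn2real (\<Sum>j<n. I j)"
    using I_fin by (subst enn2real_sum) (auto simp: sum_distrib_left)
  also have "\<dots> \<le> (real n)\<^sup>2 * enn2real (C * ennreal (1 / real n))"
    using sum_I C_fin by (intro mult_left_mono enn2real_mono) auto
  also have "\<dots> = real n * enn2real C"
    using i by (simp add: enn2real_mult power2_eq_square)
  finally show ?thesis unfolding C_def .
qed

section \<open>Almost sure convergence of the row sums\<close>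

lemma ln_smallo_of_ln_powr_smallo:
  fixes f :: "nat \<Rightarrow> real"
  assumes "1 \<le> \<gamma>" and "(\<lambda>n. ln (real n) powr \<gamma>) \<in> o(f)"
  shows "(\<lambda>n. ln (real n)) \<in> o(f)"
proof -
  have "eventually (\<lambda>n. norm (ln (real n)) \<le> 1 * norm (ln (real n) powr \<gamma>)) sequentially"
  proof (rule eventually_mono[OF eventually_ge_at_top[of 3]])
    fix n :: nat assume "3 \<le> n"
    then have "exp 1 \<le> real n" using exp_le by linarith
    then have "1 \<le> ln (real n)" using \<open>3 \<le> n\<close> by (subst ln_ge_iff) auto
    then have "ln (real n) powr 1 \<le> ln (real n) powr \<gamma>" using assms(1) by (intro powr_mono) auto
    with \<open>1 \<le> ln (real n)\<close> show "norm (ln (real n)) \<le> 1 * norm (ln (real n) powr \<gamma>)" by simp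
  qed
  then have "(\<lambda>n. ln (real n)) \<in> O(\<lambda>n. ln (real n) powr \<gamma>)" by (rule bigoI)
  then show ?thesis using assms(2) by (rule landau_o.big_small_trans)
qed

lemma filterlim_at_top_of_ln_smallo:
  fixes f :: "nat \<Rightarrow> real"
  assumes "(\<lambda>n. ln (real n)) \<in> o(f)" and "\<And>n. 0 \<le> f n"
  shows "filterlim f at_top sequentially"
proof (rule filterlim_at_top_mono)
  show "filterlim (\<lambda>n. ln (real n)) at_top sequentially"
    by (rule filterlim_compose[OF ln_at_top filterlim_real_sequentially])
  show "eventually (\<lambda>n. ln (real n) \<le> f n) sequentially"
    using landau_o.smallD[OF assms(1), of 1] assms(2) by (auto elim!: eventually_mono)
qed

lemma summable_of_nat_mult_exp_neg:
  fixes f :: "nat \<Rightarrow> real"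
  assumes "(\<lambda>n. ln (real n)) \<in> o(f)" and "\<And>n. 0 \<le> f n" and "0 < c"
  shows "summable (\<lambda>n. real n * exp (- c * f n))"
proof -
  have "eventually (\<lambda>n. norm (ln (real n)) \<le> c / 3 * norm (f n)) sequentially"
    using assms(1,3) by (intro landau_o.smallD) auto
  then have "eventually (\<lambda>n. norm (real n * exp (- c * f n)) \<le> 2 * inverse (real n ^ 2)) sequentially"
  proof (rule eventually_mono[OF eventually_conj[OF _ eventually_gt_at_top[of 0]]])
    fix n :: nat assume "norm (ln (real n)) \<le> c / 3 * norm (f n) \<and> 0 < n"
    then have "3 * ln (real n) \<le> c * f n" "0 < real n"
      using assms(2)[of n] by (auto simp: abs_if split: if_splits)
    then have "exp (- c * f n) \<le> exp (- (3 * ln (real n)))" by simp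
    also have "\<dots> = inverse (real n ^ 3)"
      using exp_of_nat_mult[of 3 "ln (real n)"] \<open>0 < real n\<close> by (simp add: exp_minus)
    finally show "norm (real n * exp (- c * f n)) \<le> 2 * inverse (real n ^ 2)"
      using \<open>0 < real n\<close> by (simp add: field_simps power_eq_if mult_left_mono)
  qed
  then show ?thesis
    by (rule summable_comparison_test_ev) (intro summable_mult inverse_power_summable; simp)
qed

lemma abs_row_norm_diff_le:
  assumes i: "i < n"
    and M_nonneg: "\<And>j. j < n \<Longrightarrow> j \<noteq> i \<Longrightarrow> 0 \<le> M i j"
    and N_nonneg: "\<And>j. j < n \<Longrightarrow> 0 \<le> N i j"
    and diag: "\<bar>M i i\<bar> \<le> R" "N i i \<le> R"
  shows "\<bar>row_norm n M i - row_norm n N i\<bar>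
         \<le> (R + \<bar>(\<Sum>j\<in>{..<n} - {i}. M i j) - (\<Sum>j\<in>{..<n} - {i}. N i j)\<bar>) / real n"
proof -
  have M_row: "(\<Sum>j<n. \<bar>M i j\<bar>) = \<bar>M i i\<bar> + (\<Sum>j\<in>{..<n} - {i}. M i j)"
    using i M_nonneg by (simp add: sum.remove[of _ i])
  have N_row: "(\<Sum>j<n. \<bar>N i j\<bar>) = N i i + (\<Sum>j\<in>{..<n} - {i}. N i j)"
    using i N_nonneg by (simp add: sum.remove[of _ i])
  have "\<bar>\<bar>M i i\<bar> - N i i\<bar> \<le> R" using diag N_nonneg[OF i] by linarith
  then have "\<bar>(\<Sum>j<n. \<bar>M i j\<bar>) - (\<Sum>j<n. \<bar>N i j\<bar>)\<bar>
             \<le> R + \<bar>(\<Sum>j\<in>{..<n} - {i}. M i j) - (\<Sum>j\<in>{..<n} - {i}. N i j)\<bar>"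
    unfolding M_row N_row by linarith
  then show ?thesis
    unfolding row_norm_def diff_divide_distrib[symmetric] abs_divide by (simp add: divide_right_mono)
qed

locale bernoulli_row_matrices = prob_space M
  for M :: "'a measure" +
  fixes \<rho> :: "nat \<Rightarrow> real" and w :: "nat \<Rightarrow> nat \<Rightarrow> nat \<Rightarrow> real" and C :: real
    and \<Lambda> :: "nat \<Rightarrow> nat \<Rightarrow> nat \<Rightarrow> 'a \<Rightarrow> real"
  assumes rho_pos: "0 < \<rho> n"
    and ln_smallo: "(\<lambda>n. ln (real n)) \<in> o(\<lambda>n. real n * \<rho> n)"
    and w_nonneg: "i < n \<Longrightarrow> j < n \<Longrightarrow> 0 \<le> w n i j"
    and w_le: "w n i j \<le> 1 / \<rho> n"
    and row_sum_w_le: "i < n \<Longrightarrow> (\<Sum>j<n. w n i j) \<le> C * real n"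
    and Lam_bern_vals: "i < n \<Longrightarrow> j < n \<Longrightarrow> i \<noteq> j \<Longrightarrow> AE \<omega> in M. \<rho> n * \<Lambda> n i j \<omega> \<in> {0, 1}"
    and Lam_bern_prob: "i < n \<Longrightarrow> j < n \<Longrightarrow> i \<noteq> j \<Longrightarrow>
                          prob {\<omega> \<in> space M. \<rho> n * \<Lambda> n i j \<omega> = 1} = \<rho> n * w n i j"
    and Lam_diag: "i < n \<Longrightarrow> \<omega> \<in> space M \<Longrightarrow> \<Lambda> n i i \<omega> \<in> {0, 1 / \<rho> n}"
    and Lam_indep: "i < n \<Longrightarrow> indep_vars (\<lambda>_. borel) (\<lambda>j. \<Lambda> n i j) {0..<n}"
begin

lemma n_rho_nonneg: "0 \<le> real n * \<rho> n"
  using rho_pos[of n] by simp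

definition off_diag_dev :: "nat \<Rightarrow> nat \<Rightarrow> 'a \<Rightarrow> real" where
  "off_diag_dev n i \<omega> = (\<Sum>j\<in>{..<n} - {i}. \<Lambda> n i j \<omega>) - (\<Sum>j\<in>{..<n} - {i}. w n i j)"

lemma off_diag_dev_measurable [measurable]:
  "i < n \<Longrightarrow> off_diag_dev n i \<in> borel_measurable M"
  using Lam_indep unfolding off_diag_dev_def indep_vars_def
  by (auto intro!: borel_measurable_diff borel_measurable_sum)

lemma prob_off_diag_dev_le:
  assumes i: "i < n" and "C * (real n * \<rho> n) \<le> A" and "0 \<le> l" "l \<le> 1"
  shows "prob {\<omega> \<in> space M. t \<le> \<rho> n * \<bar>off_diag_dev n i \<omega>\<bar>} \<le> 2 * exp (A * l\<^sup>2 - l * t)"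
proof -
  define J where "J = {..<n} - {i}"
  have indep: "indep_vars (\<lambda>_. borel) (\<lambda>j \<omega>. \<rho> n * \<Lambda> n i j \<omega>) J"
    unfolding J_def by (rule indep_vars_subset[OF indep_vars_compose2[OF Lam_indep[OF i]]]) auto
  have "(\<Sum>j\<in>J. \<rho> n * w n i j) \<le> \<rho> n * (\<Sum>j<n. w n i j)"
    unfolding J_def sum_distrib_left[symmetric] using i rho_pos[of n]
    by (intro mult_left_mono sum_mono2) (auto intro: w_nonneg)
  also have "\<dots> \<le> \<rho> n * (C * real n)"
    using row_sum_w_le[OF i] rho_pos[of n] by (intro mult_left_mono) auto
  also have "\<dots> \<le> A"
    using assms(2) by (simp add: mult_ac)
  finally have mean_le: "(\<Sum>j\<in>J. \<rho> n * w n i j) \<le> A" .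
  have "AE \<omega> in M. \<rho> n * \<Lambda> n i j \<omega> \<in> {0, 1}"
    and "prob {\<omega> \<in> space M. \<rho> n * \<Lambda> n i j \<omega> = 1} = \<rho> n * w n i j" if "j \<in> J" for j
    using that i Lam_bern_vals Lam_bern_prob unfolding J_def by blast+
  then have "prob {\<omega> \<in> space M. t \<le> \<bar>(\<Sum>j\<in>J. \<rho> n * \<Lambda> n i j \<omega>) - (\<Sum>j\<in>J. \<rho> n * w n i j)\<bar>}
                \<le> 2 * exp (A * l\<^sup>2 - l * t)"
    using mean_le assms(3,4) by (intro prob_sum_bernoulli_abs_dev_le[OF _ indep]) (auto simp: J_def)
  then show ?thesis
    unfolding off_diag_dev_def J_def
    by (simp add: sum_distrib_left[symmetric] right_diff_distrib[symmetric] abs_mult rho_pos less_imp_le)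
qed

lemma abs_row_norm_diff_le_of_off_diag_dev:
  assumes \<omega>: "\<omega> \<in> space M" and i: "i < n"
    and vals: "\<And>j. j < n \<Longrightarrow> j \<noteq> i \<Longrightarrow> \<rho> n * \<Lambda> n i j \<omega> \<in> {0, 1}"
    and dev: "\<bar>off_diag_dev n i \<omega>\<bar> \<le> D"
  shows "\<bar>row_norm n (\<lambda>i j. \<Lambda> n i j \<omega>) i - row_norm n (w n) i\<bar> \<le> (1 / \<rho> n + D) / real n"
proof -
  have "0 \<le> \<Lambda> n i j \<omega>" if "j < n" "j \<noteq> i" for j
  proof -
    have "0 \<le> \<rho> n * \<Lambda> n i j \<omega>" using vals[OF that] by auto
    then show ?thesis using rho_pos[of n] by (simp add: zero_le_mult_iff)
  qed
  moreover have "\<bar>\<Lambda> n i i \<omega>\<bar> \<le> 1 / \<rho> n"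
    using Lam_diag[OF i \<omega>] rho_pos[of n] by auto
  ultimately have "\<bar>row_norm n (\<lambda>i j. \<Lambda> n i j \<omega>) i - row_norm n (w n) i\<bar>
                   \<le> (1 / \<rho> n + \<bar>off_diag_dev n i \<omega>\<bar>) / real n"
    unfolding off_diag_dev_def using i w_nonneg w_le by (intro abs_row_norm_diff_le) auto
  also have "\<dots> \<le> (1 / \<rho> n + D) / real n"
    using dev by (simp add: divide_right_mono)
  finally show ?thesis .
qed

definition bad_rows :: "real \<Rightarrow> nat \<Rightarrow> 'a set" where
  "bad_rows \<epsilon> n = (\<Union>i<n. {\<omega> \<in> space M. \<epsilon> * (real n * \<rho> n) / 2 \<le> \<rho> n * \<bar>off_diag_dev n i \<omega>\<bar>})"

lemma bad_rows_events: "bad_rows \<epsilon> n \<in> events"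
  unfolding bad_rows_def by measurable

lemma prob_bad_rows_le:
  assumes \<epsilon>: "0 < \<epsilon>" "\<epsilon> \<le> 1"
  shows "prob (bad_rows \<epsilon> n) \<le> 2 * (real n * exp (- (\<epsilon>\<^sup>2 / (16 * max C 1)) * (real n * \<rho> n)))"
proof -
  define C1 where "C1 = max C 1"
  have C1: "1 \<le> C1" "C \<le> C1" unfolding C1_def by auto
  \<comment> \<open>Chernoff with mean bound \<open>C1 n \<rho>\<^sub>n\<close>, parameter \<open>\<epsilon> / (4 C1)\<close> and deviation \<open>\<epsilon> n \<rho>\<^sub>n / 2\<close>.\<close>
  have "prob (bad_rows \<epsilon> n)
        \<le> (\<Sum>i<n. prob {\<omega> \<in> space M. \<epsilon> * (real n * \<rho> n) / 2 \<le> \<rho> n * \<bar>off_diag_dev n i \<omega>\<bar>})"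
    unfolding bad_rows_def by (rule measure_UNION_le) auto
  also have "\<dots> \<le> (\<Sum>i<n. 2 * exp (C1 * (real n * \<rho> n) * (\<epsilon> / (4 * C1))\<^sup>2
                                 - \<epsilon> / (4 * C1) * (\<epsilon> * (real n * \<rho> n) / 2)))"
    using C1 \<epsilon> rho_pos[of n]
    by (intro sum_mono prob_off_diag_dev_le) (auto intro: mult_right_mono simp: field_simps)
  also have "\<dots> = 2 * (real n * exp (- (\<epsilon>\<^sup>2 / (16 * C1)) * (real n * \<rho> n)))"
    using C1 by (simp add: field_simps power2_eq_square)
  finally show ?thesis unfolding C1_def .
qed

lemma AE_eventually_not_bad_rows:
  assumes "0 < \<epsilon>" "\<epsilon> \<le> 1"
  shows "AE \<omega> in M. eventually (\<lambda>n. \<omega> \<in> space M - bad_rows \<epsilon> n) sequentially"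
proof (rule borel_cantelli_AE1[OF bad_rows_events])
  have "summable (\<lambda>n. 2 * (real n * exp (- (\<epsilon>\<^sup>2 / (16 * max C 1)) * (real n * \<rho> n))))"
    using assms n_rho_nonneg
    by (intro summable_mult summable_of_nat_mult_exp_neg[OF ln_smallo]) auto
  then show "summable (\<lambda>n. prob (bad_rows \<epsilon> n))"
    by (rule summable_comparison_test'[where N=0]) (use prob_bad_rows_le[OF assms] in simp)
qed (simp add: emeasure_finite less_top[symmetric])

lemma AE_eventually_row_norms_close:
  assumes \<epsilon>: "0 < \<epsilon>" "\<epsilon> \<le> 1"
  shows "AE \<omega> in M. eventually
           (\<lambda>n. \<forall>i<n. \<bar>row_norm n (\<lambda>i j. \<Lambda> n i j \<omega>) i - row_norm n (w n) i\<bar> \<le> \<epsilon>) sequentially"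
proof -
  have vals: "AE \<omega> in M. \<forall>n i j. i < n \<longrightarrow> j < n \<longrightarrow> i \<noteq> j \<longrightarrow> \<rho> n * \<Lambda> n i j \<omega> \<in> {0, 1}"
    unfolding AE_all_countable by (intro allI AE_impI Lam_bern_vals)
  have large: "eventually (\<lambda>n. 2 / \<epsilon> \<le> real n * \<rho> n) sequentially"
    using filterlim_at_top_of_ln_smallo[OF ln_smallo n_rho_nonneg]
    by (simp add: filterlim_at_top)
  show ?thesis
    using AE_eventually_not_bad_rows[OF \<epsilon>] vals AE_space
  proof eventually_elim
    case (elim \<omega>)
    from elim(1) large show ?case
    proof eventually_elim
      case (elim n)
      show ?case
      proof (intro allI impI)
        fix i assume i: "i < n"
        have "\<not> \<epsilon> * (real n * \<rho> n) / 2 \<le> \<rho> n * \<bar>off_diag_dev n i \<omega>\<bar>"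
          using elim(1) i \<open>\<omega> \<in> space M\<close> unfolding bad_rows_def by auto
        then have "\<bar>off_diag_dev n i \<omega>\<bar> \<le> \<epsilon> * real n / 2"
          using rho_pos[of n] by (simp add: algebra_simps)
        with \<open>\<omega> \<in> space M\<close> i \<open>\<forall>n i j. _\<close>
        have "\<bar>row_norm n (\<lambda>i j. \<Lambda> n i j \<omega>) i - row_norm n (w n) i\<bar> \<le> (1 / \<rho> n + \<epsilon> * real n / 2) / real n"
          by (intro abs_row_norm_diff_le_of_off_diag_dev) auto
        also have "\<dots> = 1 / (real n * \<rho> n) + \<epsilon> / 2"
          using i rho_pos[of n] by (simp add: field_simps)
        also have "\<dots> \<le> \<epsilon>"
          using elim(2) \<epsilon> rho_pos[of n] i by (simp add: field_simps)
        finally show "\<bar>row_norm n (\<lambda>i j. \<Lambda> n i j \<omega>) i - row_norm n (w n) i\<bar> \<le> \<epsilon>" .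
      qed
    qed
  qed
qed

lemma AE_Linf1_In_diff_tendsto_0:
  "AE \<omega> in M. (\<lambda>n. Linf1 (In n (\<lambda>i j. \<Lambda> n i j \<omega>)) - Linf1 (In n (w n))) \<longlonglongrightarrow> 0"
proof -
  have "AE \<omega> in M. \<forall>k. eventually (\<lambda>n. \<forall>i<n.
          \<bar>row_norm n (\<lambda>i j. \<Lambda> n i j \<omega>) i - row_norm n (w n) i\<bar> \<le> 1 / real (Suc k)) sequentially"
    unfolding AE_all_countable by (intro allI AE_eventually_row_norms_close) auto
  then show ?thesis
  proof eventually_elim
    case (elim \<omega>)
    show ?case
    proof (rule tendstoI)
      fix e :: real assume "0 < e"
      then obtain k where k: "1 / real (Suc k) < e"
        using nat_approx_posE by blast
      from elim[rule_format, of k] eventually_gt_at_top[of 0]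
      show "eventually (\<lambda>n. dist (Linf1 (In n (\<lambda>i j. \<Lambda> n i j \<omega>)) - Linf1 (In n (w n))) 0 < e) sequentially"
      proof eventually_elim
        case (elim n)
        then show ?case
          using abs_Linf1_In_diff_le[of n "\<lambda>i j. \<Lambda> n i j \<omega>" "w n" "1 / real (Suc k)"] k
          by (simp add: dist_real_def)
      qed
    qed
  qed
qed

end

theorem lemma3p5:
  fixes K :: "real \<Rightarrow> real \<Rightarrow> real"
    and \<rho> :: "nat \<Rightarrow> real"
    and \<gamma> :: real
    and M :: "'a measure"
    and \<Lambda> :: "nat \<Rightarrow> nat \<Rightarrow> nat \<Rightarrow> 'a \<Rightarrow> real"
  defines "w \<equiv> (\<lambda>n i j. min (Pn n K i j) (1 / \<rho> n))"
  assumes K_meas: "(\<lambda>(x, y). K x y) \<in> borel_measurable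
                      (restrict_space (lborel \<Otimes>\<^sub>M lborel) ({0..1} \<times> {0..1}))"
    and K_nonneg: "\<And>x y. x \<in> {0..1} \<Longrightarrow> y \<in> {0..1} \<Longrightarrow> 0 \<le> K x y"
    and K_sym: "\<And>x y. x \<in> {0..1} \<Longrightarrow> y \<in> {0..1} \<Longrightarrow> K x y = K y x"
    and K_bdd: "(SUP x\<in>{0..1}. \<integral>\<^sup>+ y\<in>{0..1}. ennreal (K x y) \<partial>lborel) < \<infinity>"
    and rho_pos: "\<And>n. 0 < \<rho> n"
    and rho_lim: "\<rho> \<longlonglongrightarrow> 0"
    and gamma: "\<gamma> > 1"
    and rho_growth: "(\<lambda>n. ln (real n) powr \<gamma>) \<in> o(\<lambda>n. real n * \<rho> n)"
    and M: "prob_space M"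
    and Lam_meas: "\<And>n i j. i < n \<Longrightarrow> j < n \<Longrightarrow> \<Lambda> n i j \<in> borel_measurable M"
    and Lam_bern_vals: "\<And>n i j. i < n \<Longrightarrow> j < n \<Longrightarrow> i \<noteq> j \<Longrightarrow>
                          (AE \<omega> in M. \<rho> n * \<Lambda> n i j \<omega> \<in> {0, 1})"
    and Lam_bern_prob: "\<And>n i j. i < n \<Longrightarrow> j < n \<Longrightarrow> i \<noteq> j \<Longrightarrow>
                          measure M {\<omega> \<in> space M. \<rho> n * \<Lambda> n i j \<omega> = 1} = \<rho> n * w n i j"
    and Lam_diag: "\<And>n i \<omega>. i < n \<Longrightarrow> \<omega> \<in> space M \<Longrightarrow> \<Lambda> n i i \<omega> \<in> {0, 1 / \<rho> n}"
    and Lam_indep: "\<And>n i. i < n \<Longrightarrow>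
                      prob_space.indep_vars M (\<lambda>_. borel) (\<lambda>j. \<Lambda> n i j) {0..<n}"
  shows "(AE \<omega> in M. (\<lambda>n. Linf1 (In n (\<lambda>i j. \<Lambda> n i j \<omega>)) - Linf1 (In n (w n)))
                          \<longlonglongrightarrow> 0)
       \<and> ((\<forall>\<epsilon>>0. \<exists>N. \<forall>n\<ge>N. \<forall>x\<in>{0..1}.
              (\<integral>\<^sup>+ y\<in>{0..1}. ennreal \<bar>In n (Pn n K) x y - K x y\<bar> \<partial>lborel) < ennreal \<epsilon>)
          \<longrightarrow> (AE \<omega> in M. (\<lambda>n. Linf1 (In n (\<lambda>i j. \<Lambda> n i j \<omega>))) \<longlonglongrightarrow> Linf1 K))"
proof -
  define C where "C = enn2real (SUP x\<in>{0..1}. \<integral>\<^sup>+ y\<in>{0..1}. ennreal (K x y) \<partial>lborel)"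
  have Pn_nonneg: "0 \<le> Pn n K i j" if "i < n" "j < n" for n i j
    using Pn_eq_nn_integral[OF K_meas K_nonneg that] by simp
  have row_sum_w: "(\<Sum>j<n. w n i j) \<le> C * real n" if "i < n" for n i
    using sum_mono[of "{..<n}" "w n i" "Pn n K i"] sum_Pn_row_le[OF K_meas K_nonneg K_bdd that]
    unfolding C_def w_def by (simp add: mult.commute)
  interpret bernoulli_row_matrices M \<rho> w C \<Lambda>
  proof (intro bernoulli_row_matrices.intro[OF M] bernoulli_row_matrices_axioms.intro)
    show "(\<lambda>n. ln (real n)) \<in> o(\<lambda>n. real n * \<rho> n)"
      using gamma by (intro ln_smallo_of_ln_powr_smallo[OF _ rho_growth]) simp
    show "0 \<le> w n i j" if "i < n" "j < n" for n i j
      using Pn_nonneg[OF that] rho_pos[of n] by (simp add: w_def)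
  qed ((rule M rho_pos row_sum_w Lam_bern_vals Lam_bern_prob Lam_diag Lam_indep; assumption) | simp add: w_def)+
  have "filterlim (\<lambda>n. 1 / \<rho> n) at_top sequentially"
    using filterlim_inverse_at_top[OF rho_lim] rho_pos by (simp add: inverse_eq_divide)
  then have deterministic: "(\<lambda>n. Linf1 (In n (w n))) \<longlonglongrightarrow> Linf1 K"
    if "\<forall>\<epsilon>>0. \<exists>N. \<forall>n\<ge>N. \<forall>x\<in>{0..1}.
          (\<integral>\<^sup>+ y\<in>{0..1}. ennreal \<bar>In n (Pn n K) x y - K x y\<bar> \<partial>lborel) < ennreal \<epsilon>"
    unfolding w_def using K_bdd Linf1_ennreal_nonneg[OF K_nonneg] that
    by (intro Linf1_In_truncated_tendsto set_borel_measurable_section[OF K_meas]) simp_all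
  show ?thesis
  proof (intro conjI impI)
    show "AE \<omega> in M. (\<lambda>n. Linf1 (In n (\<lambda>i j. \<Lambda> n i j \<omega>)) - Linf1 (In n (w n))) \<longlonglongrightarrow> 0"
      by (rule AE_Linf1_In_diff_tendsto_0)
  next
    assume approx: "\<forall>\<epsilon>>0. \<exists>N. \<forall>n\<ge>N. \<forall>x\<in>{0..1}.
              (\<integral>\<^sup>+ y\<in>{0..1}. ennreal \<bar>In n (Pn n K) x y - K x y\<bar> \<partial>lborel) < ennreal \<epsilon>"
    show "AE \<omega> in M. (\<lambda>n. Linf1 (In n (\<lambda>i j. \<Lambda> n i j \<omega>))) \<longlonglongrightarrow> Linf1 K"
      using AE_Linf1_In_diff_tendsto_0
    proof eventually_elim
      case (elim \<omega>)
      from tendsto_add[OF elim deterministic[OF approx]] show ?case by simp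
    qed
  qed
qed

end
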